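(* Let $m\in\mathbb{N}$ and let $A,B$ be finite (nonempty) sequences of positive integers. If $A$ and $B$ are $m$-palindromes, then the concatenation $ABA$ is an $m$-palindrome.
   Context: For a finite sequence $(c_0,\dots,c_k)$ of positive integers, $[c_0,\dots,c_k]$ denotes the value of the finite continued fraction $c_0+\cfrac{1}{c_1+\cfrac{1}{\ddots+\cfrac{1}{c_k}}}$. A finite sequence $(c_0,\dots,c_k)$ of positive integers is an $m$-palindrome ($m\in\mathbb{N}$) if $[c_0,\dots,c_k]=m\,[c_k,\dots,c_0]$. *)

theory Defs
  imports Complex_Main
begin

text \<open>Value of the finite continued fraction [c0, ..., ck]; the empty list is not
  a valid continued fraction (value 0 by convention, never used).\<close>
fun cf :: "nat list \<Rightarrow> real" where
  "cf [] = 0"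
| "cf [c] = real c"
| "cf (c # d # cs) = real c + 1 / cf (d # cs)"

definition pos_seq :: "nat list \<Rightarrow> bool" where
  "pos_seq cs \<longleftrightarrow> cs \<noteq> [] \<and> (\<forall>c \<in> set cs. c > 0)"

definition m_palindrome :: "nat \<Rightarrow> nat list \<Rightarrow> bool" where
  "m_palindrome m cs \<longleftrightarrow> pos_seq cs \<and> cf cs = real m * cf (rev cs)"

end

theory Submission
  imports Defs "HOL-Analysis.Cartesian_Space"
begin

text \<open>With \<open>M c = [[c, 1], [1, 0]]\<close>, the product \<open>P = M c\<^sub>0 \<cdots> M c\<^sub>k\<close> has first
  column \<open>(p, q)\<close> with \<open>[c\<^sub>0, \<dots>, c\<^sub>k] = p / q\<close>. Each \<open>M c\<close> is symmetric, so
  reversing the sequence transposes \<open>P\<close> and \<open>[c\<^sub>k, \<dots>, c\<^sub>0] = p / p'\<close> with \<open>p'\<close> the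
  upper right entry. Thus the sequence is an \<open>m\<close>-palindrome iff \<open>p' = m q\<close>, i.e.
  \<open>P D = D P\<^sup>T\<close> for \<open>D = diag(m, 1)\<close>; and this relation is preserved by \<open>X Y X\<close>, since
  \<open>(X Y X) D = X Y D X\<^sup>T = X D Y\<^sup>T X\<^sup>T = D (X Y X)\<^sup>T\<close>.\<close>

definition partial_quotient_matrix :: "nat \<Rightarrow> nat^2^2" where
  "partial_quotient_matrix c = vector [vector [c, 1], vector [1, 0]]"

fun convergent_matrix :: "nat list \<Rightarrow> nat^2^2" where
  "convergent_matrix [] = mat 1"
| "convergent_matrix (c # cs) = partial_quotient_matrix c ** convergent_matrix cs"

lemma transpose_partial_quotient_matrix [simp]:
  "transpose (partial_quotient_matrix c) = partial_quotient_matrix c"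
  by (simp add: partial_quotient_matrix_def transpose_def vec_eq_iff forall_2)

lemma convergent_matrix_append:
  "convergent_matrix (xs @ ys) = convergent_matrix xs ** convergent_matrix ys"
  by (induction xs) (simp_all add: matrix_mul_assoc del: One_nat_def)

lemma convergent_matrix_rev:
  "convergent_matrix (rev xs) = transpose (convergent_matrix xs)"
  by (induction xs) (simp_all add: convergent_matrix_append matrix_transpose_mul del: One_nat_def)

lemma convergent_matrix_Cons_column:
  "convergent_matrix (c # cs) $ 1 $ 1 = c * convergent_matrix cs $ 1 $ 1 + convergent_matrix cs $ 2 $ 1"
  "convergent_matrix (c # cs) $ 2 $ 1 = convergent_matrix cs $ 1 $ 1"
  by (simp_all add: partial_quotient_matrix_def matrix_matrix_mult_def sum_2)

lemma cf_eq_convergent_matrix: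
  assumes "pos_seq cs"
  shows "0 < convergent_matrix cs $ 1 $ 1 \<and> 0 < convergent_matrix cs $ 2 $ 1 \<and>
    cf cs = convergent_matrix cs $ 1 $ 1 / convergent_matrix cs $ 2 $ 1"
  using assms unfolding pos_seq_def
proof (induction cs rule: cf.induct)
  case (2 c)
  then show ?case by (simp only: convergent_matrix_Cons_column) (simp add: mat_def)
next
  case (3 c d cs)
  then show ?case
    by (auto simp: convergent_matrix_Cons_column[of c] field_simps simp del: convergent_matrix.simps)
qed simp

lemma m_palindrome_iff_convergent_matrix:
  assumes "pos_seq cs"
  shows "m_palindrome m cs \<longleftrightarrow> convergent_matrix cs $ 1 $ 2 = m * convergent_matrix cs $ 2 $ 1"
proof -
  let ?P = "convergent_matrix cs"
  have "pos_seq (rev cs)"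
    using assms by (simp add: pos_seq_def)
  then have rev: "0 < ?P $ 1 $ 2 \<and> cf (rev cs) = ?P $ 1 $ 1 / ?P $ 1 $ 2"
    using cf_eq_convergent_matrix[of "rev cs"] by (simp add: convergent_matrix_rev transpose_def)
  have "cf cs = m * cf (rev cs) \<longleftrightarrow> real (?P $ 1 $ 2) = real (m * ?P $ 2 $ 1)"
    using cf_eq_convergent_matrix[OF assms] rev by (auto simp: field_simps)
  then show ?thesis
    using assms by (simp only: m_palindrome_def of_nat_eq_iff) simp
qed

lemma transpose_intertwined_triple:
  fixes D X Y :: "'a::comm_semiring_1^'n^'n"
  assumes X: "X ** D = D ** transpose X" and Y: "Y ** D = D ** transpose Y"
  shows "(X ** Y ** X) ** D = D ** transpose (X ** Y ** X)"
proof -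
  have "(X ** Y ** X) ** D = X ** Y ** (X ** D)"
    by (simp only: matrix_mul_assoc)
  also have "\<dots> = X ** (Y ** D) ** transpose X"
    by (simp only: X matrix_mul_assoc)
  also have "\<dots> = (X ** D) ** transpose Y ** transpose X"
    by (simp only: Y matrix_mul_assoc)
  also have "\<dots> = D ** transpose (X ** Y ** X)"
    by (simp only: X matrix_mul_assoc matrix_transpose_mul)
  finally show ?thesis .
qed

definition diagonal2 :: "'a::zero \<Rightarrow> 'a \<Rightarrow> 'a^2^2" where
  "diagonal2 a b = vector [vector [a, 0], vector [0, b]]"

lemma intertwines_transpose_diagonal2_iff:
  fixes P :: "'a::comm_semiring_1^2^2"
  shows "P ** diagonal2 a b = diagonal2 a b ** transpose P \<longleftrightarrow> b * P $ 1 $ 2 = a * P $ 2 $ 1"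
  by (auto simp: diagonal2_def vec_eq_iff forall_2 matrix_matrix_mult_def sum_2 transpose_def
      mult.commute)

theorem lemma3p9:
  fixes m :: nat and A B :: "nat list"
  assumes "m_palindrome m A" and "m_palindrome m B"
  shows "m_palindrome m (A @ B @ A)"
proof -
  have A: "pos_seq A" and B: "pos_seq B"
    using assms unfolding m_palindrome_def by auto
  then have ABA: "pos_seq (A @ B @ A)"
    unfolding pos_seq_def by auto
  let ?D = "diagonal2 m 1"
  have "convergent_matrix A ** ?D = ?D ** transpose (convergent_matrix A)"
    "convergent_matrix B ** ?D = ?D ** transpose (convergent_matrix B)"
    using assms A B by (simp_all add: intertwines_transpose_diagonal2_iff m_palindrome_iff_convergent_matrix)
  then have "convergent_matrix (A @ B @ A) ** ?D = ?D ** transpose (convergent_matrix (A @ B @ A))"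
    by (simp add: convergent_matrix_append matrix_mul_assoc transpose_intertwined_triple)
  then show ?thesis
    using ABA by (simp add: intertwines_transpose_diagonal2_iff m_palindrome_iff_convergent_matrix)
qed

end
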